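(* If an LJB-sequent $\Gamma\vdash A$ has a derivation in LJB, then it has a non-redundant derivation, i.e. a derivation in which the same LJB-sequent does not occur twice on the same branch.
   Context: LJB: formulas $A ::= P(t_1,\dots,t_n)\mid A\rightarrow A\mid\forall x\,A$ with first-order terms. An LJB-context is a finite multiset of items; an item is a formula or $[\Gamma]_V$ ($V$ a finite set of variables bound by the bracket, $\Gamma$ an LJB-context); $FV([\Gamma]_V)=FV(\Gamma)\setminus V$. An LJB-sequent is $\Gamma\vdash A$ with $\Gamma$ an LJB-context and $A$ a formula. Cleaning rules (anywhere in a context): $[I,\Gamma]_V\longrightarrow I,[\Gamma]_V$ if $FV(I)\cap V=\emptyset$; $[\ ]_V\longrightarrow\emptyset$; $I\,I\longrightarrow I$; $\Gamma{\downarrow}$ is the normal form for a fixed strategy. LJB rules apply only to LJB-sequents with normal context in which, in each formula, bound variables are distinct and distinct from free variables; formulas are not identified modulo $\alpha$. Rules: (L$\rightarrow$) from $\Gamma'\vdash A_1,\dots,\Gamma'\vdash A_n$ infer $\Gamma\vdash P$, where $\Gamma=\Gamma_1,[\Gamma_2,[\dots\Gamma_{i-1},[\Gamma_i, A_1\rightarrow\dots\rightarrow A_n\rightarrow P]_{V_{i-1}}\dots]_{V_2}]_{V_1}$ ($i\ge1$), $\Gamma'=([\dots[[\Gamma_1]_{V_1},\Gamma_2]_{V_2},\dots,\Gamma_{i-1}]_{V_{i-1}},\Gamma_i,A_1\rightarrow\dots\rightarrow A_n\rightarrow P){\downarrow}$, $P$ atomic with no free variable in $V_1\cup\dots\cup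 V_{i-1}$; (R$\forall$) from $[\Gamma]_V{\downarrow}\vdash A$ infer $\Gamma\vdash\forall x\,A$, $V$ the set of all variables bound in $\forall x\,A$; (R$\rightarrow$) from $(\Gamma,A){\downarrow}\vdash B$ infer $\Gamma\vdash A\rightarrow B$. *)

theory Defs
  imports "HOL-Library.Multiset" "HOL-Library.FSet"
begin

datatype trm = Var nat | Fn nat "trm list"

datatype fm = Atom nat "trm list" | Imp fm fm | All nat fm

text \<open>Items: a formula, or a bracket [Gamma]_V with V a finite set of variables.
  An LJB-context is a finite multiset of items.\<close>

datatype item = F fm | Br "nat fset" "item multiset"

type_synonym ctx = "item multiset"

fun fv_trm :: "trm \<Rightarrow> nat set" where
  "fv_trm (Var x) = {x}"
| "fv_trm (Fn f ts) = (\<Union>t\<in>set ts. fv_trm t)"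

fun fv_fm :: "fm \<Rightarrow> nat set" where
  "fv_fm (Atom p ts) = (\<Union>t\<in>set ts. fv_trm t)"
| "fv_fm (Imp A B) = fv_fm A \<union> fv_fm B"
| "fv_fm (All x A) = fv_fm A - {x}"

fun bv_list :: "fm \<Rightarrow> nat list" where
  "bv_list (Atom p ts) = []"
| "bv_list (Imp A B) = bv_list A @ bv_list B"
| "bv_list (All x A) = x # bv_list A"

definition well_named :: "fm \<Rightarrow> bool" where
  "well_named A \<longleftrightarrow> distinct (bv_list A) \<and> set (bv_list A) \<inter> fv_fm A = {}"

primrec fv_item :: "item \<Rightarrow> nat set" where
  "fv_item (F A) = fv_fm A"
| "fv_item (Br V G) = (\<Union> (set_mset (image_mset fv_item G))) - fset V"

primrec fms_item :: "item \<Rightarrow> fm set" where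
  "fms_item (F A) = {A}"
| "fms_item (Br V G) = \<Union> (set_mset (image_mset fms_item G))"

definition fms_ctx :: "ctx \<Rightarrow> fm set" where
  "fms_ctx G = (\<Union>I\<in>set_mset G. fms_item I)"

inductive clean_step :: "ctx \<Rightarrow> ctx \<Rightarrow> bool" where
  out: "fv_item I \<inter> fset V = {} \<Longrightarrow>
        clean_step (add_mset (Br V (add_mset I G)) R) (add_mset I (add_mset (Br V G) R))"
| empty: "clean_step (add_mset (Br V {#}) R) R"
| dup: "clean_step (add_mset I (add_mset I R)) (add_mset I R)"
| inside: "clean_step G G' \<Longrightarrow> clean_step (add_mset (Br V G) R) (add_mset (Br V G') R)"

definition clean_normal :: "ctx \<Rightarrow> bool" where
  "clean_normal G \<longleftrightarrow> (\<nexists>G'. clean_step G G')"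

definition cleaning_strategy :: "(ctx \<Rightarrow> ctx) \<Rightarrow> bool" where
  "cleaning_strategy nf \<longleftrightarrow> (\<forall>G. clean_step\<^sup>*\<^sup>* G (nf G) \<and> clean_normal (nf G))"

text \<open>nest [(G1,V1),...,(G(i-1),V(i-1))] Gi B =
  G1,[G2,[...G(i-1),[Gi, B]_V(i-1)...]_V2]_V1\<close>
fun nest :: "(ctx \<times> nat fset) list \<Rightarrow> ctx \<Rightarrow> fm \<Rightarrow> ctx" where
  "nest [] Gi B = Gi + {#F B#}"
| "nest ((G, V) # L) Gi B = G + {#Br V (nest L Gi B)#}"

text \<open>unnest acc [(G1,V1),...] : [...[[G1]_V1,G2]_V2,...,G(i-1)]_V(i-1), starting from acc = empty\<close>
fun unnest :: "ctx \<Rightarrow> (ctx \<times> nat fset) list \<Rightarrow> ctx" where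
  "unnest acc [] = acc"
| "unnest acc ((G, V) # L) = unnest {#Br V (acc + G)#} L"

type_synonym sequent = "ctx \<times> fm"

definition ljb_sequent_ok :: "sequent \<Rightarrow> bool" where
  "ljb_sequent_ok s \<longleftrightarrow> clean_normal (fst s) \<and>
     (\<forall>A \<in> fms_ctx (fst s) \<union> {snd s}. well_named A)"

inductive ljb_rule :: "(ctx \<Rightarrow> ctx) \<Rightarrow> sequent \<Rightarrow> sequent list \<Rightarrow> bool" for nf where
  L_imp: "\<lbrakk> ljb_sequent_ok (\<Gamma>, Atom p ts);
            \<Gamma> = nest L Gi (foldr Imp As (Atom p ts));
            fv_fm (Atom p ts) \<inter> (\<Union>(G, V)\<in>set L. fset V) = {};
            \<Gamma>' = nf (unnest {#} L + Gi + {#F (foldr Imp As (Atom p ts))#}) \<rbrakk>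
          \<Longrightarrow> ljb_rule nf (\<Gamma>, Atom p ts) (map (\<lambda>A. (\<Gamma>', A)) As)"
| R_all: "\<lbrakk> ljb_sequent_ok (\<Gamma>, All x A) \<rbrakk>
          \<Longrightarrow> ljb_rule nf (\<Gamma>, All x A) [(nf {#Br (fset_of_list (bv_list (All x A))) \<Gamma>#}, A)]"
| R_imp: "\<lbrakk> ljb_sequent_ok (\<Gamma>, Imp A B) \<rbrakk>
          \<Longrightarrow> ljb_rule nf (\<Gamma>, Imp A B) [(nf (\<Gamma> + {#F A#}), B)]"

datatype dtree = Node ctx fm "dtree list"

fun root :: "dtree \<Rightarrow> sequent" where
  "root (Node G C ts) = (G, C)"

inductive is_derivation :: "(ctx \<Rightarrow> ctx) \<Rightarrow> dtree \<Rightarrow> bool" for nf where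
  "\<lbrakk> ljb_rule nf (G, C) (map root ts); \<forall>t\<in>set ts. is_derivation nf t \<rbrakk>
   \<Longrightarrow> is_derivation nf (Node G C ts)"

fun seqs :: "dtree \<Rightarrow> sequent set" where
  "seqs (Node G C ts) = insert (G, C) (\<Union>t\<in>set ts. seqs t)"

inductive non_redundant :: "dtree \<Rightarrow> bool" where
  "\<lbrakk> \<forall>t\<in>set ts. (G, C) \<notin> seqs t \<and> non_redundant t \<rbrakk>
   \<Longrightarrow> non_redundant (Node G C ts)"

end

theory Submission
  imports Defs
begin

text \<open>Once the derivations of the premises have been made
  non-redundant, either the conclusion does not occur in any of them, and they can be
  reassembled under the same rule, or it does, and the subderivation rooted at such an
  occurrence already proves the conclusion; it is non-redundant because every subtree of a
  non-redundant tree is. Nothing about the particular rules of LJB or the cleaning strategy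
  is used.\<close>

fun subtrees :: "dtree \<Rightarrow> dtree set" where
  "subtrees (Node G C ts) = insert (Node G C ts) (\<Union>t\<in>set ts. subtrees t)"

lemma seqs_eq_root_subtrees: "seqs t = root ` subtrees t"
  by (induction t) auto

lemma is_derivation_subtrees:
  "is_derivation nf t \<Longrightarrow> s \<in> subtrees t \<Longrightarrow> is_derivation nf s"
proof (induction t)
  case (Node G C ts)
  then show ?case
    by (auto elim: is_derivation.cases)
qed

lemma non_redundant_subtrees:
  "non_redundant t \<Longrightarrow> s \<in> subtrees t \<Longrightarrow> non_redundant s"
proof (induction t)
  case (Node G C ts)
  then show ?case
    by (auto elim: non_redundant.cases)
qed

lemma is_derivation_imp_non_redundant:
  assumes "is_derivation nf d"
  shows "\<exists>d'. is_derivation nf d' \<and> root d' = root d \<and> non_redundant d'"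
  using assms
proof (induction d)
  case (1 G C ts)
  then obtain f where f: "\<forall>t\<in>set ts.
      is_derivation nf (f t) \<and> root (f t) = root t \<and> non_redundant (f t)"
    by (metis (no_types, lifting) bchoice)
  show ?case
  proof (cases "\<exists>t\<in>set ts. (G, C) \<in> seqs (f t)")
    case True
    then obtain t s where "t \<in> set ts" "s \<in> subtrees (f t)" "root s = (G, C)"
      by (auto simp: seqs_eq_root_subtrees)
    with f show ?thesis
      by (metis is_derivation_subtrees non_redundant_subtrees root.simps)
  next
    case False
    have "map root (map f ts) = map root ts"
      using f by simp
    with "1.hyps" f have "is_derivation nf (Node G C (map f ts))"
      by (intro is_derivation.intros) (metis, auto)
    moreover have "non_redundant (Node G C (map f ts))"
      using False f by (auto intro!: non_redundant.intros)
    ultimately show ?thesis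
      by auto
  qed
qed

theorem proposition14:
  fixes nf :: "ctx \<Rightarrow> ctx" and \<Gamma> :: ctx and A :: fm
  assumes "cleaning_strategy nf"
    and "\<exists>d. is_derivation nf d \<and> root d = (\<Gamma>, A)"
  shows "\<exists>d. is_derivation nf d \<and> root d = (\<Gamma>, A) \<and> non_redundant d"
  using assms(2) is_derivation_imp_non_redundant by metis

end
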